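(* Let $\bm w=(w_j)_{j\ge1}$ be a stationary Markov stick-breaking weights sequence with parameters $(\pi,\psi)$, and let $\bm v=(v_j)_{j\ge1}$ be its underlying Markov chain of length variables. Then: (i) If $\mathbb P\big[\bigcup_{j\ge1}\{v_j=1\}\big]=1$, then $\sum_{j\ge1}w_j=1$ a.s. (ii) If $\pi(\{0\})=0$, then $\sum_{j\ge1}w_j=1$ a.s. (iii) If $\pi$ is $\psi$-ergodic, then $\pi\neq\delta_0$ if and only if $\sum_{j\ge1}w_j=1$ a.s.
   Context: Length variables $\bm v=(v_j)_{j\ge1}$ are $[0,1]$-valued random variables and define stick-breaking weights $w_1=v_1$, $w_j=v_j\prod_{i=1}^{j-1}(1-v_i)$ for $j\ge2$. If $\bm v$ is a time-homogeneous Markov chain with initial distribution $\pi$ (the law of $v_1$) and one-step transition kernel $\psi(v,B)=\mathbb P[v_{j+1}\in B\mid v_j=v]$ on $([0,1],\mathcal B_{[0,1]})$, and $\pi$ is invariant for $\psi$ (i.e. $\pi(B)=\int\psi(v,B)\pi(dv)$ for all Borel $B$, so $\bm v$ is stationary), then $\bm w$ is called a stationary Markov stick-breaking weights sequence with parameters $(\pi,\psi)$. The set of $\psi$-invariant probability measures is convex; $\pi$ is called $\psi$-ergodic if it is an extreme point of this set. *)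

theory Defs
  imports "HOL-Probability.Probability"
begin

definition unit_space :: "real measure" where
  "unit_space = restrict_space borel {0..1}"

definition transition_kernel :: "(real \<Rightarrow> real measure) \<Rightarrow> bool" where
  "transition_kernel \<psi> \<longleftrightarrow> \<psi> \<in> unit_space \<rightarrow>\<^sub>M prob_algebra unit_space"

text \<open>Iterated integral giving the finite-dimensional distributions of a
  time-homogeneous Markov chain with kernel psi:
  mc_fdd psi A i m x = 1_{A i}(x) * int psi(x,dy) mc_fdd psi A (i+1) (m-1) y.\<close>
fun mc_fdd :: "(real \<Rightarrow> real measure) \<Rightarrow> (nat \<Rightarrow> real set) \<Rightarrow> nat \<Rightarrow> nat \<Rightarrow> real \<Rightarrow> ennreal" where
  "mc_fdd \<psi> A i 0 x = indicator (A i) x"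
| "mc_fdd \<psi> A i (Suc m) x = indicator (A i) x * (\<integral>\<^sup>+ y. mc_fdd \<psi> A (Suc i) m y \<partial>(\<psi> x))"

text \<open>v (indexed from 0, v 0 = v_1) is a time-homogeneous Markov chain on [0,1] on the
  probability space M with initial distribution pi and transition kernel psi:
  P[v_0 in A_0, ..., v_n in A_n] = int pi(dx0) 1_{A_0}(x0) int psi(x0,dx1) 1_{A_1}(x1) ...\<close>
definition markov_chain :: "'a measure \<Rightarrow> (nat \<Rightarrow> 'a \<Rightarrow> real) \<Rightarrow> real measure \<Rightarrow> (real \<Rightarrow> real measure) \<Rightarrow> bool" where
  "markov_chain M v \<pi> \<psi> \<longleftrightarrow>
     (\<forall>j. v j \<in> M \<rightarrow>\<^sub>M unit_space) \<and>
     (\<forall>n A. (\<forall>i\<le>n. A i \<in> sets unit_space) \<longrightarrow>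
        emeasure M {x \<in> space M. \<forall>i\<le>n. v i x \<in> A i} = (\<integral>\<^sup>+ x. mc_fdd \<psi> A 0 n x \<partial>\<pi>))"

definition invariant_measure :: "(real \<Rightarrow> real measure) \<Rightarrow> real measure \<Rightarrow> bool" where
  "invariant_measure \<psi> \<mu> \<longleftrightarrow> prob_space \<mu> \<and> sets \<mu> = sets unit_space \<and>
     (\<forall>B \<in> sets unit_space. emeasure \<mu> B = (\<integral>\<^sup>+ v. emeasure (\<psi> v) B \<partial>\<mu>))"

text \<open>pi is psi-ergodic: an extreme point of the convex set of psi-invariant probability measures.\<close>
definition ergodic_measure :: "(real \<Rightarrow> real measure) \<Rightarrow> real measure \<Rightarrow> bool" where
  "ergodic_measure \<psi> \<pi> \<longleftrightarrow> invariant_measure \<psi> \<pi> \<and>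
     (\<forall>\<mu>1 \<mu>2 (t::real). invariant_measure \<psi> \<mu>1 \<longrightarrow> invariant_measure \<psi> \<mu>2 \<longrightarrow> 0 < t \<longrightarrow> t < 1 \<longrightarrow>
        (\<forall>B \<in> sets unit_space. emeasure \<pi> B = ennreal t * emeasure \<mu>1 B + ennreal (1 - t) * emeasure \<mu>2 B)
        \<longrightarrow> \<mu>1 = \<pi> \<and> \<mu>2 = \<pi>)"

text \<open>Stick-breaking weights (0-indexed): w j = v j * prod_{i<j} (1 - v i).\<close>
definition sb_weight :: "(nat \<Rightarrow> 'a \<Rightarrow> real) \<Rightarrow> nat \<Rightarrow> 'a \<Rightarrow> real" where
  "sb_weight v j x = v j x * (\<Prod>i<j. 1 - v i x)"

end

theory Submission
  imports Defs
begin

(* The partial sums of the stick-breaking weights are 1 - prod_{i<n} (1 - v_i), so the weights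
   sum to 1 as soon as v_n exceeds some eps > 0 infinitely often. By Poincare recurrence for
   the stationary chain, a set (eps, 1] that is visited once is visited infinitely often almost
   surely; hence the weights sum to 1 almost surely on the event that some v_k is nonzero, which
   gives (i) and (ii). For (iii), if pi = delta_0 all v_j vanish. Otherwise, either 0 is not
   absorbing, and then P[v_0 = ... = v_n = 0] <= psi(0, {0})^n tends to 0, or 0 is absorbing,
   and then ergodicity forces pi {0} = 0: else pi would be a proper mixture of delta_0 and of
   pi conditioned on (0, 1], both of which are invariant. *)

lemma stick_breaking_partial_sum:
  fixes u :: "nat \<Rightarrow> real"
  shows "(\<Sum>j<n. u j * (\<Prod>i<j. 1 - u i)) = 1 - (\<Prod>i<n. 1 - u i)"
  by (induction n) (simp_all add: algebra_simps)

lemma decseq_prod_one_minus: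
  fixes u :: "nat \<Rightarrow> real"
  assumes "\<And>i. 0 \<le> u i \<and> u i \<le> 1"
  shows "decseq (\<lambda>n. \<Prod>i<n. 1 - u i)"
  unfolding decseq_Suc_iff using assms by (simp add: mult_left_le prod_nonneg)

lemma prod_one_minus_le_power:
  fixes u :: "nat \<Rightarrow> real"
  assumes range: "\<And>i. 0 \<le> u i \<and> u i \<le> 1" and often: "\<And>m. \<exists>n\<ge>m. \<epsilon> < u n"
  shows "\<exists>N. (\<Prod>i<N. 1 - u i) \<le> (1 - \<epsilon>) ^ K"
proof (induction K)
  case 0
  show ?case by (rule exI[of _ 0]) simp
next
  case (Suc K)
  then obtain N where N: "(\<Prod>i<N. 1 - u i) \<le> (1 - \<epsilon>) ^ K" by blast
  obtain n where n: "N \<le> n" "\<epsilon> < u n" using often by blast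
  have "(\<Prod>i<Suc n. 1 - u i) = (\<Prod>i<n. 1 - u i) * (1 - u n)"
    by simp
  also have "\<dots> \<le> (\<Prod>i<N. 1 - u i) * (1 - \<epsilon>)"
    using decseq_prod_one_minus[OF range, THEN decseqD, OF n(1)] n(2) range
    by (intro mult_mono) (auto simp: prod_nonneg)
  also have "\<dots> \<le> (1 - \<epsilon>) ^ Suc K"
    using N n(2) range[of n] by (simp add: mult_right_mono mult.commute)
  finally show ?case ..
qed

lemma prod_one_minus_tendsto_zero:
  fixes u :: "nat \<Rightarrow> real"
  assumes range: "\<And>i. 0 \<le> u i \<and> u i \<le> 1" and "0 < \<epsilon>"
    and often: "\<And>m. \<exists>n\<ge>m. \<epsilon> < u n"
  shows "(\<lambda>n. \<Prod>i<n. 1 - u i) \<longlonglongrightarrow> 0"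
proof (rule order_tendstoI)
  fix r :: real assume "0 < r"
  have "\<epsilon> < 1"
    using often[of 0] range by (meson le_less_trans not_le)
  then have "(\<lambda>K. (1 - \<epsilon>) ^ K) \<longlonglongrightarrow> 0"
    using \<open>0 < \<epsilon>\<close> by (intro LIMSEQ_power_zero) auto
  from order_tendstoD(2)[OF this \<open>0 < r\<close>] obtain K where "(1 - \<epsilon>) ^ K < r"
    by (auto simp: eventually_sequentially)
  moreover obtain N where "(\<Prod>i<N. 1 - u i) \<le> (1 - \<epsilon>) ^ K"
    using prod_one_minus_le_power[OF range often] by blast
  moreover have "decseq (\<lambda>n. \<Prod>i<n. 1 - u i)"
    using range by (rule decseq_prod_one_minus)
  ultimately have "(\<Prod>i<n. 1 - u i) < r" if "N \<le> n" for n
    using decseqD[OF _ that, of "\<lambda>n. \<Prod>i<n. 1 - u i"] by linarith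
  then show "eventually (\<lambda>n. (\<Prod>i<n. 1 - u i) < r) sequentially"
    unfolding eventually_sequentially by blast
next
  fix r :: real assume "r < 0"
  have "0 \<le> (\<Prod>i<n. 1 - u i)" for n
    using range by (simp add: prod_nonneg)
  with \<open>r < 0\<close> show "eventually (\<lambda>n. r < (\<Prod>i<n. 1 - u i)) sequentially"
    by (intro always_eventually allI) (rule less_le_trans)
qed

lemma stick_breaking_sums_one:
  fixes u :: "nat \<Rightarrow> real"
  assumes "\<And>i. 0 \<le> u i \<and> u i \<le> 1" and "0 < \<epsilon>" and "\<And>m. \<exists>n\<ge>m. \<epsilon> < u n"
  shows "(\<lambda>j. u j * (\<Prod>i<j. 1 - u i)) sums 1"
proof -
  have "(\<lambda>n. 1 - (\<Prod>i<n. 1 - u i)) \<longlonglongrightarrow> 1 - 0"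
    using prod_one_minus_tendsto_zero[OF assms] by (intro tendsto_diff tendsto_const)
  then show ?thesis unfolding sums_def stick_breaking_partial_sum by simp
qed

lemma (in prob_space) eq_return_if_emeasure_singleton_1:
  assumes "{a} \<in> sets M" and "emeasure M {a} = 1"
  shows "M = return M a"
proof (rule AE_eq_constD)
  show "AE x in M. x = a"
    using AE_in_set_eq_1[OF assms(1)] assms(2) emeasure_eq_measure by simp
qed

lemma space_unit_space: "space unit_space = {0..1}"
  by (simp add: unit_space_def space_restrict_space)

lemma sets_unit_space_iff: "A \<in> sets unit_space \<longleftrightarrow> A \<in> sets borel \<and> A \<subseteq> {0..1}"
  by (auto simp: unit_space_def sets_restrict_space_iff)

lemma singleton_sets_unit_space: "a \<in> {0..1} \<Longrightarrow> {a} \<in> sets unit_space"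
  by (simp add: sets_unit_space_iff)

lemma positive_part_sets_unit_space: "{0<..1} \<in> sets unit_space"
  by (auto simp: sets_unit_space_iff)

locale stationary_markov_chain = prob_space M
  for M :: "'a measure" and v :: "nat \<Rightarrow> 'a \<Rightarrow> real"
    and \<pi> :: "real measure" and \<psi> :: "real \<Rightarrow> real measure" +
  assumes transition_kernel: "transition_kernel \<psi>"
    and invariant: "invariant_measure \<psi> \<pi>"
    and markov_chain: "markov_chain M v \<pi> \<psi>"
begin

lemma v_measurable[measurable]: "v j \<in> M \<rightarrow>\<^sub>M unit_space"
  using markov_chain unfolding markov_chain_def by blast

lemma v_range: "x \<in> space M \<Longrightarrow> 0 \<le> v j x \<and> v j x \<le> 1"
  using measurable_space[OF v_measurable, of x j] by (auto simp: space_unit_space)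

lemma emeasure_fdd:
  assumes "\<And>i. A i \<in> sets unit_space"
  shows "emeasure M {x \<in> space M. \<forall>i\<le>n. v i x \<in> A i} = (\<integral>\<^sup>+x. mc_fdd \<psi> A 0 n x \<partial>\<pi>)"
  using markov_chain assms unfolding markov_chain_def by blast

lemma sets_\<pi>: "sets \<pi> = sets unit_space"
  and emeasure_\<pi>_invariant: "B \<in> sets unit_space \<Longrightarrow> emeasure \<pi> B = (\<integral>\<^sup>+y. emeasure (\<psi> y) B \<partial>\<pi>)"
  using invariant unfolding invariant_measure_def by auto

sublocale \<pi>: prob_space \<pi>
  using invariant unfolding invariant_measure_def by auto

lemma space_\<pi>: "space \<pi> = {0..1}"
  using sets_eq_imp_space_eq[OF sets_\<pi>] by (simp add: space_unit_space)

lemma kernel_measurable: "\<psi> \<in> unit_space \<rightarrow>\<^sub>M subprob_algebra unit_space"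
  using transition_kernel unfolding transition_kernel_def by (rule measurable_prob_algebraD)

lemma kernel_measurable_\<pi>: "\<psi> \<in> \<pi> \<rightarrow>\<^sub>M subprob_algebra unit_space"
  using kernel_measurable measurable_cong_sets[OF sets_\<pi> refl] by blast

lemma emeasure_kernel_measurable:
  "B \<in> sets unit_space \<Longrightarrow> (\<lambda>y. emeasure (\<psi> y) B) \<in> borel_measurable unit_space"
  by (rule measurable_compose[OF kernel_measurable measurable_emeasure_subprob_algebra])

lemma
  assumes "x \<in> {0..1}"
  shows prob_space_kernel: "prob_space (\<psi> x)"
    and sets_kernel: "sets (\<psi> x) = sets unit_space"
  using measurable_space[OF transition_kernel[unfolded transition_kernel_def], of x] assms
  by (auto simp: space_prob_algebra space_unit_space)

lemma bind_kernel_invariant: "\<pi> \<bind> \<psi> = \<pi>"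
proof (rule measure_eqI)
  have "space \<pi> \<noteq> {}" by (simp add: space_\<pi>)
  show sets_eq: "sets (\<pi> \<bind> \<psi>) = sets \<pi>"
    by (subst sets_bind[where N=unit_space]) (auto simp: space_\<pi> sets_kernel sets_\<pi>)
  fix B assume "B \<in> sets (\<pi> \<bind> \<psi>)"
  then have "B \<in> sets unit_space" by (simp add: sets_eq sets_\<pi>)
  then show "emeasure (\<pi> \<bind> \<psi>) B = emeasure \<pi> B"
    using emeasure_bind[OF \<open>space \<pi> \<noteq> {}\<close> kernel_measurable_\<pi>] emeasure_\<pi>_invariant by simp
qed

lemma nn_integral_kernel_invariant:
  "g \<in> borel_measurable unit_space \<Longrightarrow> (\<integral>\<^sup>+x. (\<integral>\<^sup>+y. g y \<partial>\<psi> x) \<partial>\<pi>) = (\<integral>\<^sup>+x. g x \<partial>\<pi>)"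
  using nn_integral_bind[OF _ kernel_measurable_\<pi>, of g] bind_kernel_invariant by simp

lemma mc_fdd_measurable:
  "(\<And>j. A j \<in> sets unit_space) \<Longrightarrow> mc_fdd \<psi> A i m \<in> borel_measurable unit_space"
proof (induction m arbitrary: i)
  case 0
  then show ?case by simp
next
  case (Suc m)
  have "(\<lambda>x. \<integral>\<^sup>+y. mc_fdd \<psi> A (Suc i) m y \<partial>\<psi> x) \<in> borel_measurable unit_space"
    using measurable_compose[OF kernel_measurable
        nn_integral_measurable_subprob_algebra[OF Suc.IH[OF Suc.prems]]] by simp
  with Suc.prems show ?case by simp
qed

lemma mc_fdd_shift: "mc_fdd \<psi> A (i + k) m x = mc_fdd \<psi> (\<lambda>j. A (j + k)) i m x"
proof (induction m arbitrary: i x)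
  case (Suc m)
  have "mc_fdd \<psi> A (Suc i + k) m = mc_fdd \<psi> (\<lambda>j. A (j + k)) (Suc i) m"
    using Suc.IH by (intro ext)
  then show ?case by simp
qed simp

lemma nn_integral_mc_fdd_drop_prefix:
  assumes "\<And>j. A j \<in> sets unit_space" and "\<And>j. j < k \<Longrightarrow> A j = {0..1}"
  shows "(\<integral>\<^sup>+x. mc_fdd \<psi> A 0 (k + n) x \<partial>\<pi>) = (\<integral>\<^sup>+x. mc_fdd \<psi> (\<lambda>j. A (j + k)) 0 n x \<partial>\<pi>)"
  using assms
proof (induction k arbitrary: A)
  case (Suc k)
  have "(\<integral>\<^sup>+x. mc_fdd \<psi> A 0 (Suc k + n) x \<partial>\<pi>) = (\<integral>\<^sup>+x. (\<integral>\<^sup>+y. mc_fdd \<psi> A 1 (k + n) y \<partial>\<psi> x) \<partial>\<pi>)"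
    using Suc.prems(2)[of 0] by (intro nn_integral_cong) (simp add: space_\<pi>)
  also have "\<dots> = (\<integral>\<^sup>+x. mc_fdd \<psi> A 1 (k + n) x \<partial>\<pi>)"
    by (intro nn_integral_kernel_invariant mc_fdd_measurable Suc.prems)
  also have "\<dots> = (\<integral>\<^sup>+x. mc_fdd \<psi> (\<lambda>j. A (j + 1)) 0 (k + n) x \<partial>\<pi>)"
    using mc_fdd_shift[of A 0 1] by simp
  also have "\<dots> = (\<integral>\<^sup>+x. mc_fdd \<psi> (\<lambda>j. A (j + 1 + k)) 0 n x \<partial>\<pi>)"
    using Suc.IH[of "\<lambda>j. A (j + 1)"] Suc.prems by simp
  finally show ?case by (simp add: ac_simps)
qed simp

text \<open>Padding with k unconstrained leading coordinates turns the event into one about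
  v 0, ..., v (k + n); the padding is then integrated out by the invariance of pi.\<close>
lemma emeasure_shift:
  assumes "\<And>i. A i \<in> sets unit_space"
  shows "emeasure M {x \<in> space M. \<forall>i\<le>n. v (k + i) x \<in> A i}
       = emeasure M {x \<in> space M. \<forall>i\<le>n. v i x \<in> A i}"
proof -
  define A' where "A' j = (if j < k then {0..1} else A (j - k))" for j
  have A': "A' j \<in> sets unit_space" for j
    using assms sets.top[of unit_space] by (simp add: A'_def space_unit_space)
  have "{x \<in> space M. \<forall>i\<le>n. v (k + i) x \<in> A i} = {x \<in> space M. \<forall>i\<le>k + n. v i x \<in> A' i}"
  proof (intro Collect_cong conj_cong refl)
    fix x assume "x \<in> space M"
    then have "(\<forall>i<k. v i x \<in> A' i)" by (simp add: A'_def v_range)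
    moreover have "(\<forall>i\<le>n. v (k + i) x \<in> A i) \<longleftrightarrow> (\<forall>i. k \<le> i \<and> i \<le> k + n \<longrightarrow> v i x \<in> A' i)"
      by (auto simp: A'_def dest: spec[of _ "k + _"]) (metis add_diff_inverse_nat add_le_cancel_left not_less)
    ultimately show "(\<forall>i\<le>n. v (k + i) x \<in> A i) \<longleftrightarrow> (\<forall>i\<le>k + n. v i x \<in> A' i)"
      by (meson not_less)
  qed
  also have "emeasure M \<dots> = (\<integral>\<^sup>+x. mc_fdd \<psi> A' 0 (k + n) x \<partial>\<pi>)"
    by (rule emeasure_fdd[OF A'])
  also have "\<dots> = (\<integral>\<^sup>+x. mc_fdd \<psi> A 0 n x \<partial>\<pi>)"
    using nn_integral_mc_fdd_drop_prefix[of A' k n] A' by (simp add: A'_def)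
  also have "\<dots> = emeasure M {x \<in> space M. \<forall>i\<le>n. v i x \<in> A i}"
    by (rule emeasure_fdd[OF assms, symmetric])
  finally show ?thesis .
qed

lemma emeasure_marginal:
  assumes "A \<in> sets unit_space"
  shows "emeasure M {x \<in> space M. v j x \<in> A} = emeasure \<pi> A"
proof -
  have "emeasure M {x \<in> space M. v j x \<in> A} = emeasure M {x \<in> space M. \<forall>i\<le>0. v (j + i) x \<in> A}"
    by simp
  also have "\<dots> = emeasure M {x \<in> space M. \<forall>i\<le>0. v i x \<in> A}"
    using emeasure_shift[of "\<lambda>_. A" 0 j] assms by simp
  also have "\<dots> = emeasure \<pi> A"
    using emeasure_fdd[of "\<lambda>_. A" 0] assms by (simp add: sets_\<pi>)
  finally show ?thesis .
qed

definition visit_then_avoid :: "real set \<Rightarrow> nat \<Rightarrow> nat \<Rightarrow> 'a set" where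
  "visit_then_avoid A k h =
     {x \<in> space M. \<forall>i\<le>h. v (k + i) x \<in> (if i = 0 then A else {0..1} - A)}"

lemma visit_then_avoid_events:
  assumes "A \<in> sets unit_space"
  shows "visit_then_avoid A k h \<in> events"
proof -
  have [measurable]: "(if i = 0 then A else {0..1} - A) \<in> sets unit_space" for i
    using assms sets.Diff[OF sets.top assms] by (simp add: space_unit_space)
  show ?thesis
    unfolding visit_then_avoid_def by measurable
qed

lemma measure_visit_then_avoid_shift:
  assumes "A \<in> sets unit_space"
  shows "measure M (visit_then_avoid A k h) = measure M (visit_then_avoid A 0 h)"
  using emeasure_shift[of "\<lambda>i. if i = 0 then A else {0..1} - A" h k] assms sets.top[of unit_space]
  by (simp add: visit_then_avoid_def measure_def space_unit_space sets.Diff)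

lemma disjoint_visit_then_avoid:
  assumes "K \<le> H"
  shows "disjoint_family_on (\<lambda>k. visit_then_avoid A k (H - k)) {..<K}"
proof -
  have "x \<notin> visit_then_avoid A b (H - b)"
    if "x \<in> visit_then_avoid A a (H - a)" "a < b" "b < K" for x a b
  proof -
    have "b - a \<le> H - a"
      using that(2,3) assms by simp
    with that(1) have "v (a + (b - a)) x \<notin> A"
      unfolding visit_then_avoid_def using \<open>a < b\<close> by fastforce
    then show ?thesis
      using \<open>a < b\<close> unfolding visit_then_avoid_def by force
  qed
  then show ?thesis
    unfolding disjoint_family_on_def
    by (metis disjoint_iff_not_equal lessThan_iff nat_neq_iff)
qed

text \<open>Poincare recurrence: a last visit at time k lies in every visit_then_avoid A k h,
  and for k' < K these events with horizon K + k are disjoint and equally likely.\<close>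
lemma emeasure_last_visit:
  assumes [measurable]: "A \<in> sets unit_space"
  shows "emeasure M {x \<in> space M. v k x \<in> A \<and> (\<forall>n>k. v n x \<notin> A)} = 0"
proof -
  define B where "B = {x \<in> space M. v k x \<in> A \<and> (\<forall>n>k. v n x \<notin> A)}"
  have B_le: "measure M B \<le> measure M (visit_then_avoid A k' h)" for k' h
  proof -
    have "B \<subseteq> visit_then_avoid A k h"
      unfolding B_def visit_then_avoid_def using v_range by auto
    then have "measure M B \<le> measure M (visit_then_avoid A k h)"
      using visit_then_avoid_events[OF assms] by (rule finite_measure_mono)
    then show ?thesis
      using measure_visit_then_avoid_shift[OF assms] by metis
  qed
  have "real K * measure M B \<le> 1" for K
  proof -
    let ?E = "\<lambda>k'. visit_then_avoid A k' (K + k - k')"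
    have "real K * measure M B \<le> (\<Sum>k'<K. measure M (?E k'))"
      using sum_mono[of "{..<K}" "\<lambda>_. measure M B"] B_le by simp
    also have "\<dots> = measure M (\<Union>k'<K. ?E k')"
      using disjoint_visit_then_avoid[of K "K + k" A] visit_then_avoid_events[OF assms]
      by (intro finite_measure_finite_Union[symmetric]) auto
    also have "\<dots> \<le> 1"
      by (rule prob_le_1)
    finally show ?thesis .
  qed
  then have "measure M B = 0"
    by (metis ex_less_of_nat_mult measure_nonneg not_le order.not_eq_order_implies_strict zero_less_one)
  then show ?thesis
    by (simp add: B_def emeasure_eq_measure)
qed

lemma AE_visits_infinitely_often:
  assumes [measurable]: "A \<in> sets unit_space"
  shows "AE x in M. (\<exists>k. v k x \<in> A) \<longrightarrow> (\<forall>m. \<exists>n\<ge>m. v n x \<in> A)"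
proof -
  have "AE x in M. v k x \<in> A \<longrightarrow> (\<exists>n>k. v n x \<in> A)" for k
  proof (rule AE_I')
    show "{x \<in> space M. v k x \<in> A \<and> (\<forall>n>k. v n x \<notin> A)} \<in> null_sets M"
      using emeasure_last_visit[OF assms] by (intro null_setsI) measurable
  qed auto
  then have "AE x in M. \<forall>k. v k x \<in> A \<longrightarrow> (\<exists>n>k. v n x \<in> A)"
    by (simp add: AE_all_countable)
  then show ?thesis
  proof eventually_elim
    case (elim x)
    show ?case
    proof (intro impI allI)
      assume "\<exists>k. v k x \<in> A"
      then show "\<exists>n\<ge>m. v n x \<in> A" for m
      proof (induction m)
        case (Suc m)
        then obtain n where "m \<le> n" "v n x \<in> A" by blast
        with elim show ?case by (meson Suc_leI le_less_trans)
      qed simp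
    qed
  qed
qed

lemma AE_sums_one_if_nonzero:
  "AE x in M. (\<exists>k. v k x \<noteq> 0) \<longrightarrow> (\<lambda>j. sb_weight v j x) sums 1"
proof -
  define A where "A m = {1 / real (Suc m)<..1}" for m
  have "A m \<in> sets unit_space" for m
    by (auto simp: A_def sets_unit_space_iff) (smt (verit) of_nat_0_le_iff divide_pos_pos)
  then have "AE x in M. \<forall>m. (\<exists>k. v k x \<in> A m) \<longrightarrow> (\<forall>m'. \<exists>n\<ge>m'. v n x \<in> A m)"
    by (simp add: AE_all_countable AE_visits_infinitely_often)
  then show ?thesis
  proof (rule AE_mp, intro AE_I2 impI)
    fix x assume x: "x \<in> space M"
      and often: "\<forall>m. (\<exists>k. v k x \<in> A m) \<longrightarrow> (\<forall>m'. \<exists>n\<ge>m'. v n x \<in> A m)"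
      and "\<exists>k. v k x \<noteq> 0"
    then obtain k where "0 < v k x" using v_range[OF x] by (metis less_eq_real_def)
    then obtain m where "1 / real (Suc m) < v k x"
      using reals_Archimedean by (auto simp: divide_inverse)
    then have "v k x \<in> A m" using v_range[OF x] by (simp add: A_def)
    then have "\<exists>n\<ge>m'. 1 / real (Suc m) < v n x" for m'
      using often by (auto simp: A_def)
    then show "(\<lambda>j. sb_weight v j x) sums 1"
      unfolding sb_weight_def by (intro stick_breaking_sums_one[OF v_range[OF x]]) auto
  qed
qed

lemma AE_sums_one_if_AE_visit_one:
  assumes "emeasure M {x \<in> space M. \<exists>j. v j x = 1} = 1"
  shows "AE x in M. (\<lambda>j. sb_weight v j x) sums 1"
proof -
  have [measurable]: "{1} \<in> sets unit_space"
    by (simp add: singleton_sets_unit_space)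
  have "{x \<in> space M. \<exists>j. v j x = 1} = {x \<in> space M. \<exists>j. v j x \<in> {1}}"
    by simp
  also have "\<dots> \<in> events"
    by measurable
  finally have "AE x in M. x \<in> {x \<in> space M. \<exists>j. v j x = 1}"
    by (subst AE_in_set_eq_1) (use assms in \<open>simp_all add: emeasure_eq_measure\<close>)
  with AE_sums_one_if_nonzero show ?thesis
    by eventually_elim auto
qed

lemma AE_sums_one_if_no_atom_zero:
  assumes "emeasure \<pi> {0} = 0"
  shows "AE x in M. (\<lambda>j. sb_weight v j x) sums 1"
proof -
  have [measurable]: "{0} \<in> sets unit_space"
    by (simp add: singleton_sets_unit_space)
  have "{x \<in> space M. v 0 x \<in> {0}} \<in> null_sets M"
    using emeasure_marginal[of "{0}" 0] assms by (intro null_setsI) auto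
  then have "AE x in M. v 0 x \<notin> {0}"
    by (rule AE_I') auto
  with AE_sums_one_if_nonzero show ?thesis
    by eventually_elim auto
qed

lemma not_AE_sums_one_if_dirac_zero:
  assumes "\<pi> = return unit_space 0"
  shows "\<not> (AE x in M. (\<lambda>j. sb_weight v j x) sums 1)"
proof
  have [measurable]: "{0} \<in> sets unit_space"
    by (simp add: singleton_sets_unit_space)
  have "AE x in M. v j x \<in> {0}" for j
    using AE_in_set_eq_1[of "{x \<in> space M. v j x \<in> {0}}"] emeasure_marginal[of "{0}" j] assms
    by (simp add: emeasure_eq_measure space_unit_space)
  then have "AE x in M. \<forall>j. v j x = 0"
    by (simp add: AE_all_countable)
  moreover assume "AE x in M. (\<lambda>j. sb_weight v j x) sums 1"
  ultimately have "AE x in M. False"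
    by eventually_elim (use sums_unique2 in \<open>fastforce simp: sb_weight_def\<close>)
  then show False
    by simp
qed

lemma mc_fdd_zeros:
  "mc_fdd \<psi> (\<lambda>_. {0}) i n x = indicator {0} x * emeasure (\<psi> 0) {0} ^ n"
proof (induction n arbitrary: i x)
  case (Suc n)
  have "(\<integral>\<^sup>+y. mc_fdd \<psi> (\<lambda>_. {0}) (Suc i) n y \<partial>\<psi> 0)
      = (\<integral>\<^sup>+y. emeasure (\<psi> 0) {0} ^ n * indicator {0} y \<partial>\<psi> 0)"
    by (simp add: Suc.IH mult.commute)
  also have "\<dots> = emeasure (\<psi> 0) {0} ^ n * emeasure (\<psi> 0) {0}"
    by (simp add: nn_integral_cmult_indicator sets_kernel singleton_sets_unit_space)
  finally show ?case
    by (simp add: indicator_def mult.commute)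
qed simp

lemma AE_exists_nonzero_if_zero_not_absorbing:
  assumes "emeasure (\<psi> 0) {0} < 1"
  shows "AE x in M. \<exists>k. v k x \<noteq> 0"
proof -
  have [measurable]: "{0} \<in> sets unit_space"
    by (simp add: singleton_sets_unit_space)
  define Z where "Z = {x \<in> space M. \<forall>k. v k x \<in> {0}}"
  have Z_events: "Z \<in> events"
    unfolding Z_def by measurable
  obtain r where r: "emeasure (\<psi> 0) {0} = ennreal r" "0 \<le> r" "r < 1"
    using assms by (cases "emeasure (\<psi> 0) {0}") (auto simp: ennreal_less_iff)
  have "measure M Z \<le> r ^ n" for n
  proof -
    have "emeasure M Z \<le> emeasure M {x \<in> space M. \<forall>i\<le>n. v i x \<in> {0}}"
      unfolding Z_def by (intro emeasure_mono) auto
    also have "\<dots> = (\<integral>\<^sup>+x. emeasure (\<psi> 0) {0} ^ n * indicator {0} x \<partial>\<pi>)"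
      using emeasure_fdd[of "\<lambda>_. {0}" n] by (simp add: mc_fdd_zeros mult.commute)
    also have "\<dots> = ennreal (r ^ n) * emeasure \<pi> {0}"
      using r by (simp add: nn_integral_cmult_indicator sets_\<pi> ennreal_power)
    also have "\<dots> \<le> ennreal (r ^ n)"
      using \<pi>.emeasure_le_1 mult_left_mono[of _ 1] by fastforce
    finally show ?thesis
      using r by (simp add: emeasure_eq_measure)
  qed
  moreover have "(\<lambda>n. r ^ n) \<longlonglongrightarrow> 0"
    using r by (intro LIMSEQ_power_zero) auto
  ultimately have "measure M Z \<le> 0"
    by (intro LIMSEQ_le_const) auto
  then have "Z \<in> null_sets M"
    using Z_events by (simp add: emeasure_eq_measure null_setsI measure_le_0_iff)
  then show ?thesis
    by (rule AE_I') (auto simp: Z_def)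
qed

lemma nn_integral_split_zero:
  assumes "f \<in> borel_measurable \<pi>"
  shows "(\<integral>\<^sup>+y. f y \<partial>\<pi>) = (\<integral>\<^sup>+y. f y * indicator {0<..1} y \<partial>\<pi>) + f 0 * emeasure \<pi> {0}"
proof -
  have [measurable]: "{0<..1} \<in> sets \<pi>" "{0} \<in> sets \<pi>"
    by (simp_all add: sets_\<pi> positive_part_sets_unit_space singleton_sets_unit_space)
  have "(\<integral>\<^sup>+y. f y \<partial>\<pi>) = (\<integral>\<^sup>+y. f y * indicator {0<..1} y + f 0 * indicator {0} y \<partial>\<pi>)"
    by (intro nn_integral_cong) (auto simp: space_\<pi> indicator_def)
  also have "\<dots> = (\<integral>\<^sup>+y. f y * indicator {0<..1} y \<partial>\<pi>) + f 0 * emeasure \<pi> {0}"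
    using assms by (simp add: nn_integral_add nn_integral_cmult_indicator)
  finally show ?thesis .
qed

lemma emeasure_kernel_absorbing_zero:
  assumes "emeasure (\<psi> 0) {0} = 1" and "B \<in> sets unit_space"
  shows "emeasure (\<psi> 0) B = indicator B 0"
proof -
  have "\<psi> 0 = return (\<psi> 0) 0"
    using assms by (intro prob_space.eq_return_if_emeasure_singleton_1)
      (simp_all add: prob_space_kernel sets_kernel singleton_sets_unit_space)
  with assms(2) show ?thesis
    by (metis emeasure_return sets_kernel atLeastAtMost_iff order_refl zero_le_one)
qed

lemma invariant_return_zero:
  assumes "emeasure (\<psi> 0) {0} = 1"
  shows "invariant_measure \<psi> (return unit_space 0)"
  unfolding invariant_measure_def
proof (intro conjI ballI)
  show "prob_space (return unit_space 0)"
    by (simp add: prob_space_return space_unit_space)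
  fix B assume B: "B \<in> sets unit_space"
  then show "emeasure (return unit_space 0) B = (\<integral>\<^sup>+y. emeasure (\<psi> y) B \<partial>return unit_space 0)"
    using emeasure_kernel_measurable[OF B] emeasure_kernel_absorbing_zero[OF assms B]
    by (simp add: nn_integral_return space_unit_space)
qed simp

lemma emeasure_split_zero:
  assumes "B \<in> sets unit_space"
  shows "emeasure \<pi> B = emeasure \<pi> ({0<..1} \<inter> B) + indicator B 0 * emeasure \<pi> {0}"
proof -
  have "B \<in> sets \<pi>" "{0<..1} \<inter> B \<in> sets \<pi>"
    using assms positive_part_sets_unit_space by (simp_all add: sets_\<pi>)
  then show ?thesis
    using nn_integral_split_zero[of "indicator B"]
    by (simp add: Int_commute flip: indicator_inter_arith)
qed

lemma nn_integral_kernel_positive_part: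
  assumes "emeasure (\<psi> 0) {0} = 1" and B: "B \<in> sets unit_space"
  shows "(\<integral>\<^sup>+y. emeasure (\<psi> y) B * indicator {0<..1} y \<partial>\<pi>) = emeasure \<pi> ({0<..1} \<inter> B)"
proof -
  have "emeasure \<pi> B = emeasure \<pi> ({0<..1} \<inter> B) + indicator B 0 * emeasure \<pi> {0}"
    using B by (rule emeasure_split_zero)
  moreover have "emeasure \<pi> B
      = (\<integral>\<^sup>+y. emeasure (\<psi> y) B * indicator {0<..1} y \<partial>\<pi>) + indicator B 0 * emeasure \<pi> {0}"
    using emeasure_\<pi>_invariant[OF B] nn_integral_split_zero emeasure_kernel_measurable[OF B]
      emeasure_kernel_absorbing_zero[OF assms]
    by (simp add: measurable_cong_sets[OF sets_\<pi> refl])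
  moreover have "indicator B 0 * emeasure \<pi> {0} \<noteq> \<top>"
    using \<pi>.emeasure_le_1[of "{0}"] by (auto simp: indicator_def top_unique)
  ultimately show ?thesis
    by (simp add: infinity_ennreal_def)
qed

lemma invariant_uniform_measure_positive_part:
  assumes "emeasure (\<psi> 0) {0} = 1" and "emeasure \<pi> {0<..1} \<noteq> 0"
  shows "invariant_measure \<psi> (uniform_measure \<pi> {0<..1})"
  unfolding invariant_measure_def
proof (intro conjI ballI)
  have D: "{0<..1} \<in> sets \<pi>"
    by (simp add: sets_\<pi> positive_part_sets_unit_space)
  show "prob_space (uniform_measure \<pi> {0<..1})"
    using assms(2) \<pi>.emeasure_finite by (intro prob_space_uniform_measure) auto
  show "sets (uniform_measure \<pi> {0<..1}) = sets unit_space"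
    by (simp add: sets_\<pi>)
  fix B assume B: "B \<in> sets unit_space"
  have "(\<integral>\<^sup>+y. emeasure (\<psi> y) B \<partial>uniform_measure \<pi> {0<..1})
      = (\<integral>\<^sup>+y. emeasure (\<psi> y) B * indicator {0<..1} y \<partial>\<pi>) / emeasure \<pi> {0<..1}"
    using emeasure_kernel_measurable[OF B] D
    by (simp add: nn_integral_uniform_measure measurable_cong_sets[OF sets_\<pi> refl])
  also have "\<dots> = emeasure (uniform_measure \<pi> {0<..1}) B"
    using B D by (simp add: nn_integral_kernel_positive_part[OF assms(1) B] sets_\<pi>)
  finally show "emeasure (uniform_measure \<pi> {0<..1}) B
      = (\<integral>\<^sup>+y. emeasure (\<psi> y) B \<partial>uniform_measure \<pi> {0<..1})" ..
qed

lemma emeasure_positive_part: "emeasure \<pi> {0<..1} = ennreal (1 - measure \<pi> {0})"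
proof -
  have "{0<..1} = space \<pi> - {0}"
    by (auto simp: space_\<pi>)
  then show ?thesis
    by (simp add: \<pi>.emeasure_eq_measure \<pi>.prob_compl sets_\<pi> singleton_sets_unit_space)
qed

lemma emeasure_eq_mixture:
  assumes "measure \<pi> {0} < 1" and B: "B \<in> sets unit_space"
  shows "emeasure \<pi> B = ennreal (measure \<pi> {0}) * emeasure (return unit_space 0) B
      + ennreal (1 - measure \<pi> {0}) * emeasure (uniform_measure \<pi> {0<..1}) B"
proof -
  have "{0<..1} \<in> sets \<pi>" "B \<in> sets \<pi>"
    using B by (simp_all add: sets_\<pi> positive_part_sets_unit_space)
  then have "ennreal (1 - measure \<pi> {0}) * emeasure (uniform_measure \<pi> {0<..1}) B
      = emeasure \<pi> ({0<..1} \<inter> B)"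
    using assms(1) by (simp add: emeasure_positive_part ennreal_times_divide
        mult.commute[of "ennreal (1 - measure \<pi> {0})"] mult_divide_eq_ennreal)
  then show ?thesis
    using emeasure_split_zero[OF B] B
    by (simp add: \<pi>.emeasure_eq_measure mult.commute add.commute)
qed

text \<open>If 0 < pi {0} < 1, then pi is a proper convex combination of the invariant measures
  delta_0 and pi conditioned on (0, 1].\<close>
lemma ergodic_absorbing_zero:
  assumes "ergodic_measure \<psi> \<pi>" and absorbing: "emeasure (\<psi> 0) {0} = 1"
  shows "emeasure \<pi> {0} = 0 \<or> \<pi> = return unit_space 0"
proof -
  define t where "t = measure \<pi> {0}"
  consider "t = 0" | "t = 1" | "0 < t" "t < 1"
    using \<pi>.prob_le_1[of "{0}"] measure_nonneg[of \<pi> "{0}"] unfolding t_def by linarith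
  then show ?thesis
  proof cases
    case 1
    then show ?thesis
      by (simp add: t_def \<pi>.emeasure_eq_measure)
  next
    case 2
    then have "\<pi> = return \<pi> 0"
      by (intro \<pi>.eq_return_if_emeasure_singleton_1)
        (simp_all add: t_def \<pi>.emeasure_eq_measure sets_\<pi> singleton_sets_unit_space)
    then show ?thesis
      using return_cong[OF sets_\<pi>] by simp
  next
    case 3
    have "invariant_measure \<psi> (uniform_measure \<pi> {0<..1})"
      using 3 by (intro invariant_uniform_measure_positive_part absorbing)
        (simp add: emeasure_positive_part t_def)
    then have "return unit_space 0 = \<pi>"
      using assms(1) invariant_return_zero[OF absorbing] 3 emeasure_eq_mixture
      unfolding ergodic_measure_def t_def by blast
    then show ?thesis
      by simp
  qed
qed

lemma AE_sums_one_if_ergodic: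
  assumes "ergodic_measure \<psi> \<pi>" and "\<pi> \<noteq> return unit_space 0"
  shows "AE x in M. (\<lambda>j. sb_weight v j x) sums 1"
proof (cases "emeasure (\<psi> 0) {0} = 1")
  case True
  with assms have "emeasure \<pi> {0} = 0"
    using ergodic_absorbing_zero by blast
  then show ?thesis
    by (rule AE_sums_one_if_no_atom_zero)
next
  case False
  then have "emeasure (\<psi> 0) {0} < 1"
    using prob_space.emeasure_le_1[OF prob_space_kernel, of 0] by (simp add: order_less_le)
  then have "AE x in M. \<exists>k. v k x \<noteq> 0"
    by (rule AE_exists_nonzero_if_zero_not_absorbing)
  with AE_sums_one_if_nonzero show ?thesis
    by eventually_elim blast
qed

end

theorem mainTheorem1:
  fixes M :: "'a measure" and v :: "nat \<Rightarrow> 'a \<Rightarrow> real"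
    and \<pi> :: "real measure" and \<psi> :: "real \<Rightarrow> real measure"
  assumes "prob_space M"
    and "transition_kernel \<psi>"
    and "invariant_measure \<psi> \<pi>"
    and "markov_chain M v \<pi> \<psi>"
  shows "(emeasure M {x \<in> space M. \<exists>j. v j x = 1} = 1 \<longrightarrow>
            (AE x in M. (\<lambda>j. sb_weight v j x) sums 1))
       \<and> (emeasure \<pi> {0} = 0 \<longrightarrow> (AE x in M. (\<lambda>j. sb_weight v j x) sums 1))
       \<and> (ergodic_measure \<psi> \<pi> \<longrightarrow>
            (\<pi> \<noteq> return unit_space 0 \<longleftrightarrow> (AE x in M. (\<lambda>j. sb_weight v j x) sums 1)))"
proof -
  interpret stationary_markov_chain M v \<pi> \<psi>
    using assms by (intro stationary_markov_chain.intro stationary_markov_chain_axioms.intro)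
  show ?thesis
    using AE_sums_one_if_AE_visit_one AE_sums_one_if_no_atom_zero
      not_AE_sums_one_if_dirac_zero AE_sums_one_if_ergodic by blast
qed

end
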